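(* Let $G$ be an orderable group. Then: (1) $\operatorname{Conj}(G)$ is a right orderable quandle. (2) $\operatorname{Core}(G)$ is a left orderable quandle. (3) If $\phi\in\operatorname{Aut}(G)$ is an order reversing automorphism, then $\operatorname{Alex}(G,\phi)$ is a left orderable quandle.
   Context: A group $G$ is orderable if it admits a linear order $<$ such that $x<y$ implies $zx<zy$ and $xz<yz$ for all $x,y,z\in G$; an automorphism $\phi$ of $G$ is order reversing (for such an order) if $x<y$ implies $\phi(y)<\phi(x)$. $\operatorname{Conj}(G)$ is the set $G$ with operation $a*b=b^{-1}ab$; $\operatorname{Core}(G)$ is the set $G$ with operation $a*b=ba^{-1}b$; for $\phi\in\operatorname{Aut}(G)$, $\operatorname{Alex}(G,\phi)$ is the set $G$ with operation $a*b=\phi(ab^{-1})b$; these are quandles. A quandle $Q$ with operation $*$ is right orderable if there is a linear order $<$ on $Q$ such that $x<y$ implies $x*z<y*z$ for all $x,y,z\in Q$, and left orderable if there is a linear order $<$ on $Q$ such that $x<y$ implies $z*x<z*y$ for all $x,y,z\in Q$. *)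

theory Defs
  imports "HOL-Algebra.Group"
begin

definition lin_order_on :: "'a set \<Rightarrow> ('a \<Rightarrow> 'a \<Rightarrow> bool) \<Rightarrow> bool" where
  "lin_order_on S lt \<longleftrightarrow>
     (\<forall>x\<in>S. \<not> lt x x) \<and>
     (\<forall>x\<in>S. \<forall>y\<in>S. \<forall>z\<in>S. lt x y \<longrightarrow> lt y z \<longrightarrow> lt x z) \<and>
     (\<forall>x\<in>S. \<forall>y\<in>S. x \<noteq> y \<longrightarrow> lt x y \<or> lt y x)"

definition group_order :: "('a, 'b) monoid_scheme \<Rightarrow> ('a \<Rightarrow> 'a \<Rightarrow> bool) \<Rightarrow> bool" where
  "group_order G lt \<longleftrightarrow> lin_order_on (carrier G) lt \<and>
     (\<forall>x\<in>carrier G. \<forall>y\<in>carrier G. \<forall>z\<in>carrier G. lt x y \<longrightarrow>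
        lt (z \<otimes>\<^bsub>G\<^esub> x) (z \<otimes>\<^bsub>G\<^esub> y) \<and> lt (x \<otimes>\<^bsub>G\<^esub> z) (y \<otimes>\<^bsub>G\<^esub> z))"

definition orderable_group :: "('a, 'b) monoid_scheme \<Rightarrow> bool" where
  "orderable_group G \<longleftrightarrow> group G \<and> (\<exists>lt. group_order G lt)"

definition order_reversing :: "('a, 'b) monoid_scheme \<Rightarrow> ('a \<Rightarrow> 'a \<Rightarrow> bool) \<Rightarrow> ('a \<Rightarrow> 'a) \<Rightarrow> bool" where
  "order_reversing G lt \<phi> \<longleftrightarrow>
     (\<forall>x\<in>carrier G. \<forall>y\<in>carrier G. lt x y \<longrightarrow> lt (\<phi> y) (\<phi> x))"

definition conj_op :: "('a, 'b) monoid_scheme \<Rightarrow> 'a \<Rightarrow> 'a \<Rightarrow> 'a" where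
  "conj_op G a b = inv\<^bsub>G\<^esub> b \<otimes>\<^bsub>G\<^esub> a \<otimes>\<^bsub>G\<^esub> b"

definition core_op :: "('a, 'b) monoid_scheme \<Rightarrow> 'a \<Rightarrow> 'a \<Rightarrow> 'a" where
  "core_op G a b = b \<otimes>\<^bsub>G\<^esub> inv\<^bsub>G\<^esub> a \<otimes>\<^bsub>G\<^esub> b"

definition alex_op :: "('a, 'b) monoid_scheme \<Rightarrow> ('a \<Rightarrow> 'a) \<Rightarrow> 'a \<Rightarrow> 'a \<Rightarrow> 'a" where
  "alex_op G \<phi> a b = \<phi> (a \<otimes>\<^bsub>G\<^esub> inv\<^bsub>G\<^esub> b) \<otimes>\<^bsub>G\<^esub> b"

definition is_quandle :: "'a set \<Rightarrow> ('a \<Rightarrow> 'a \<Rightarrow> 'a) \<Rightarrow> bool" where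
  "is_quandle Q op \<longleftrightarrow>
     (\<forall>a\<in>Q. \<forall>b\<in>Q. op a b \<in> Q) \<and>
     (\<forall>a\<in>Q. op a a = a) \<and>
     (\<forall>b\<in>Q. bij_betw (\<lambda>a. op a b) Q Q) \<and>
     (\<forall>a\<in>Q. \<forall>b\<in>Q. \<forall>c\<in>Q. op (op a b) c = op (op a c) (op b c))"

definition right_orderable_quandle :: "'a set \<Rightarrow> ('a \<Rightarrow> 'a \<Rightarrow> 'a) \<Rightarrow> bool" where
  "right_orderable_quandle Q op \<longleftrightarrow> is_quandle Q op \<and>
     (\<exists>lt. lin_order_on Q lt \<and>
        (\<forall>x\<in>Q. \<forall>y\<in>Q. \<forall>z\<in>Q. lt x y \<longrightarrow> lt (op x z) (op y z)))"

definition left_orderable_quandle :: "'a set \<Rightarrow> ('a \<Rightarrow> 'a \<Rightarrow> 'a) \<Rightarrow> bool" where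
  "left_orderable_quandle Q op \<longleftrightarrow> is_quandle Q op \<and>
     (\<exists>lt. lin_order_on Q lt \<and>
        (\<forall>x\<in>Q. \<forall>y\<in>Q. \<forall>z\<in>Q. lt x y \<longrightarrow> lt (op z x) (op z y)))"

end

theory Submission
  imports Defs
begin

text \<open>In all three cases the bi-invariant order of the group itself orders the quandle.
  Conjugation \<open>x \<mapsto> z\<inverse> x z\<close> is order preserving. In \<open>Core(G)\<close>, \<open>z * x = x z\<inverse> x\<close> is a
  product of the two increasing functions \<open>x\<close> and \<open>z\<inverse> x\<close> of \<open>x\<close>. In \<open>Alex(G, \<phi>)\<close>,
  \<open>z * x = \<phi>(z) \<phi>(x)\<inverse> x\<close>; since both \<open>\<phi>\<close> and inversion reverse the order, \<open>\<phi>(x)\<inverse>\<close>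
  is increasing in \<open>x\<close>, and so is the whole product.\<close>

context group
begin

lemma mult_inv_cancel_left [simp]: "x \<in> carrier G \<Longrightarrow> y \<in> carrier G \<Longrightarrow> x \<otimes> (inv x \<otimes> y) = y"
  by (simp add: m_assoc[symmetric])

lemma inv_mult_cancel_left [simp]: "x \<in> carrier G \<Longrightarrow> y \<in> carrier G \<Longrightarrow> inv x \<otimes> (x \<otimes> y) = y"
  by (simp add: m_assoc[symmetric])

lemma bij_betw_mult_right:
  assumes "c \<in> carrier G"
  shows "bij_betw (\<lambda>x. x \<otimes> c) (carrier G) (carrier G)"
  by (rule bij_betw_byWitness[where f' = "\<lambda>x. x \<otimes> inv c"]) (use assms in \<open>auto simp: m_assoc\<close>)

lemma bij_betw_mult_left:
  assumes "c \<in> carrier G"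
  shows "bij_betw (\<lambda>x. c \<otimes> x) (carrier G) (carrier G)"
  by (rule bij_betw_byWitness[where f' = "\<lambda>x. inv c \<otimes> x"]) (use assms in \<open>auto simp: m_assoc[symmetric]\<close>)

lemma is_quandle_conj_op: "is_quandle (carrier G) (conj_op G)"
  unfolding is_quandle_def
proof (intro conjI ballI)
  fix b assume b: "b \<in> carrier G"
  have "bij_betw ((\<lambda>x. x \<otimes> b) \<circ> (\<lambda>x. inv b \<otimes> x)) (carrier G) (carrier G)"
    using b by (auto intro: bij_betw_trans[OF bij_betw_mult_left bij_betw_mult_right])
  then show "bij_betw (\<lambda>a. conj_op G a b) (carrier G) (carrier G)"
    by (simp add: comp_def conj_op_def)
next
  fix a b c assume "a \<in> carrier G" "b \<in> carrier G" "c \<in> carrier G"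
  then show "conj_op G (conj_op G a b) c = conj_op G (conj_op G a c) (conj_op G b c)"
    by (simp add: conj_op_def inv_mult_group m_assoc)
qed (auto simp: conj_op_def m_assoc)

lemma is_quandle_core_op: "is_quandle (carrier G) (core_op G)"
  unfolding is_quandle_def
proof (intro conjI ballI)
  fix b assume "b \<in> carrier G"
  then show "bij_betw (\<lambda>a. core_op G a b) (carrier G) (carrier G)"
    by (intro bij_betw_byWitness[where f' = "\<lambda>a. core_op G a b"])
       (auto simp: core_op_def m_assoc inv_mult_group)
next
  fix a b c assume "a \<in> carrier G" "b \<in> carrier G" "c \<in> carrier G"
  then show "core_op G (core_op G a b) c = core_op G (core_op G a c) (core_op G b c)"
    by (simp add: core_op_def inv_mult_group m_assoc)
qed (auto simp: core_op_def m_assoc)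

end

locale group_automorphism = group_hom G G \<phi> for G (structure) and \<phi> +
  assumes bij: "bij_betw \<phi> (carrier G) (carrier G)"

lemma group_automorphismI:
  assumes "group G" and "\<phi> \<in> iso G G"
  shows "group_automorphism G \<phi>"
  using assms by (simp add: group_automorphism_def group_automorphism_axioms_def
      group_hom_def group_hom_axioms_def iso_def)

context group_automorphism
begin

lemma alex_op_eq:
  "a \<in> carrier G \<Longrightarrow> b \<in> carrier G \<Longrightarrow> alex_op G \<phi> a b = \<phi> a \<otimes> inv (\<phi> b) \<otimes> b"
  by (simp add: alex_op_def hom_mult)

lemma alex_op_mult_inv:
  assumes "a \<in> carrier G" "b \<in> carrier G" "c \<in> carrier G"
  shows "alex_op G \<phi> a c \<otimes> inv (alex_op G \<phi> b c) = \<phi> (a \<otimes> inv b)"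
  using assms by (simp add: alex_op_eq hom_mult inv_mult_group m_assoc)

lemma is_quandle_alex_op: "is_quandle (carrier G) (alex_op G \<phi>)"
  unfolding is_quandle_def
proof (intro conjI ballI)
  fix b assume b: "b \<in> carrier G"
  have "bij_betw ((\<lambda>x. x \<otimes> b) \<circ> (\<phi> \<circ> (\<lambda>x. x \<otimes> inv b))) (carrier G) (carrier G)"
    using b by (auto intro: bij_betw_trans[OF bij_betw_trans[OF bij_betw_mult_right bij] bij_betw_mult_right])
  then show "bij_betw (\<lambda>a. alex_op G \<phi> a b) (carrier G) (carrier G)"
    by (simp add: comp_def alex_op_def)
next
  fix a b c assume abc: "a \<in> carrier G" "b \<in> carrier G" "c \<in> carrier G"
  have "alex_op G \<phi> (alex_op G \<phi> a c) (alex_op G \<phi> b c)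
      = \<phi> (alex_op G \<phi> a c \<otimes> inv (alex_op G \<phi> b c)) \<otimes> (\<phi> (b \<otimes> inv c) \<otimes> c)"
    by (simp add: alex_op_def)
  also have "\<dots> = \<phi> (\<phi> (a \<otimes> inv b)) \<otimes> \<phi> (b \<otimes> inv c) \<otimes> c"
    using abc by (simp add: alex_op_mult_inv m_assoc)
  also have "\<dots> = alex_op G \<phi> (alex_op G \<phi> a b) c"
    using abc by (simp add: alex_op_def hom_mult m_assoc)
  finally show "alex_op G \<phi> (alex_op G \<phi> a b) c
      = alex_op G \<phi> (alex_op G \<phi> a c) (alex_op G \<phi> b c)" ..
qed (auto simp: alex_op_def)

end

locale ordered_group = group +
  fixes less :: "'a \<Rightarrow> 'a \<Rightarrow> bool" (infix \<open>\<prec>\<close> 50)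
  assumes group_order: "group_order G (\<prec>)"
begin

lemma lin_order: "lin_order_on (carrier G) (\<prec>)"
  using group_order by (simp add: group_order_def)

lemma less_trans:
  "x \<prec> y \<Longrightarrow> y \<prec> z \<Longrightarrow> x \<in> carrier G \<Longrightarrow> y \<in> carrier G \<Longrightarrow> z \<in> carrier G \<Longrightarrow> x \<prec> z"
  using lin_order unfolding lin_order_on_def by blast

lemma mult_strict_left_mono:
  "x \<prec> y \<Longrightarrow> x \<in> carrier G \<Longrightarrow> y \<in> carrier G \<Longrightarrow> z \<in> carrier G \<Longrightarrow> z \<otimes> x \<prec> z \<otimes> y"
  using group_order unfolding group_order_def by blast

lemma mult_strict_right_mono:
  "x \<prec> y \<Longrightarrow> x \<in> carrier G \<Longrightarrow> y \<in> carrier G \<Longrightarrow> z \<in> carrier G \<Longrightarrow> x \<otimes> z \<prec> y \<otimes> z"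
  using group_order unfolding group_order_def by blast

lemma mult_strict_mono:
  assumes "a \<prec> b" "c \<prec> d" "a \<in> carrier G" "b \<in> carrier G" "c \<in> carrier G" "d \<in> carrier G"
  shows "a \<otimes> c \<prec> b \<otimes> d"
proof -
  have "a \<otimes> c \<prec> b \<otimes> c" using assms by (simp add: mult_strict_right_mono)
  moreover have "b \<otimes> c \<prec> b \<otimes> d" using assms by (simp add: mult_strict_left_mono)
  ultimately show ?thesis using assms by (auto intro: less_trans)
qed

lemma inv_strict_antimono:
  assumes "x \<prec> y" "x \<in> carrier G" "y \<in> carrier G"
  shows "inv y \<prec> inv x"
proof -
  have "inv y \<otimes> x \<otimes> inv x \<prec> inv y \<otimes> y \<otimes> inv x"
    using assms by (intro mult_strict_left_mono mult_strict_right_mono) auto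
  moreover have "inv y \<otimes> x \<otimes> inv x = inv y" "inv y \<otimes> y \<otimes> inv x = inv x"
    using assms by (simp_all add: m_assoc)
  ultimately show ?thesis
    by simp
qed

lemma conj_op_strict_right_mono:
  "x \<prec> y \<Longrightarrow> x \<in> carrier G \<Longrightarrow> y \<in> carrier G \<Longrightarrow> z \<in> carrier G
    \<Longrightarrow> conj_op G x z \<prec> conj_op G y z"
  by (simp add: conj_op_def mult_strict_left_mono mult_strict_right_mono)

lemma core_op_strict_left_mono:
  assumes "x \<prec> y" "x \<in> carrier G" "y \<in> carrier G" "z \<in> carrier G"
  shows "core_op G z x \<prec> core_op G z y"
proof -
  have "x \<otimes> (inv z \<otimes> x) \<prec> y \<otimes> (inv z \<otimes> y)"
    using assms by (simp add: mult_strict_mono mult_strict_left_mono)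
  then show ?thesis
    using assms by (simp add: core_op_def m_assoc)
qed

lemma right_orderable_quandle_conj_op: "right_orderable_quandle (carrier G) (conj_op G)"
  unfolding right_orderable_quandle_def
  using is_quandle_conj_op lin_order conj_op_strict_right_mono by blast

lemma left_orderable_quandle_core_op: "left_orderable_quandle (carrier G) (core_op G)"
  unfolding left_orderable_quandle_def
  using is_quandle_core_op lin_order core_op_strict_left_mono by blast

end

locale ordered_group_reversing_automorphism =
  ordered_group + group_automorphism G \<phi> for \<phi> +
  assumes reversing: "order_reversing G (\<prec>) \<phi>"
begin

lemma alex_op_strict_left_mono:
  assumes "x \<prec> y" "x \<in> carrier G" "y \<in> carrier G" "z \<in> carrier G"
  shows "alex_op G \<phi> z x \<prec> alex_op G \<phi> z y"
proof -
  have "\<phi> y \<prec> \<phi> x"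
    using reversing assms by (simp add: order_reversing_def)
  then have "\<phi> z \<otimes> inv (\<phi> x) \<prec> \<phi> z \<otimes> inv (\<phi> y)"
    using assms by (simp add: inv_strict_antimono mult_strict_left_mono)
  then show ?thesis
    using assms by (simp add: alex_op_eq mult_strict_mono)
qed

lemma left_orderable_quandle_alex_op: "left_orderable_quandle (carrier G) (alex_op G \<phi>)"
  unfolding left_orderable_quandle_def
  using is_quandle_alex_op lin_order alex_op_strict_left_mono by blast

end

theorem proposition3p4:
  fixes G :: "('a, 'b) monoid_scheme"
  assumes "orderable_group G"
  shows "right_orderable_quandle (carrier G) (conj_op G) \<and>
         left_orderable_quandle (carrier G) (core_op G) \<and>
         (\<forall>\<phi>. \<phi> \<in> iso G G \<longrightarrow> (\<exists>lt. group_order G lt \<and> order_reversing G lt \<phi>)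
              \<longrightarrow> left_orderable_quandle (carrier G) (alex_op G \<phi>))"
proof -
  have G: "group G" and "\<exists>lt. group_order G lt"
    using assms by (auto simp: orderable_group_def)
  then obtain lt where ordered: "ordered_group G lt"
    by (auto simp: ordered_group_def ordered_group_axioms_def)
  have alex: "left_orderable_quandle (carrier G) (alex_op G \<phi>)"
    if "\<phi> \<in> iso G G" "group_order G lt'" "order_reversing G lt' \<phi>" for \<phi> lt'
  proof -
    interpret ordered_group_reversing_automorphism G lt' \<phi>
      using G that group_automorphismI
      by (simp add: ordered_group_reversing_automorphism_def ordered_group_def
          ordered_group_axioms_def ordered_group_reversing_automorphism_axioms_def)
    show ?thesis
      by (rule left_orderable_quandle_alex_op)
  qed
  show ?thesis
    using ordered_group.right_orderable_quandle_conj_op[OF ordered]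
      ordered_group.left_orderable_quandle_core_op[OF ordered] alex
    by blast
qed

end
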